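(* Let $\mathcal{H}_o=(V,\vec H,\bm{w})$ be a strongly connected weighted oriented hypergraph with $|V|\ge2$. For all distinct $u,v\in V$ and all $\alpha\in[0,1)$, $$\frac{\kappa_\alpha(u,v)}{1-\alpha}\le\frac{2\max_{h\in\vec H}w_h}{d(u,v)}.$$
   Context: A weighted oriented hypergraph $(V,\vec H,\bm w)$ has a finite vertex set $V$, a finite set $\vec H$ of hyperedges, each an ordered pair $h=(A_h,B_h)$ of nonempty subsets of $V$ with $A_h\cap B_h=\emptyset$, such that for every $h\in\vec H$ its reversal $h^-=(B_h,A_h)$ also belongs to $\vec H$, and positive weights with $w_h=w_{h^-}$. A directed path from $u$ to $v$ is a sequence of hyperedges $h_1,\dots,h_l$ with $u\in A_{h_1}$, $v\in B_{h_l}$, $B_{h_j}\cap A_{h_{j+1}}\ne\emptyset$; strongly connected means such a path exists for all distinct $u,v$. $d(u,v)=\inf_\gamma\sum_{h\in\gamma}w_h$ over directed paths from $u$ to $v$ ($u\ne v$), $d(u,u)=0$. $\Gamma(v)=\{z:\exists h\in\vec H\text{ with }v\in A_h,z\in B_h\}$. For $\alpha\in[0,1]$: $\mu^\alpha_{u^{in}}(u)=\alpha$, $\mu^\alpha_{u^{in}}(z)=(1-\alpha)\sum_{h':u\in B_{h'},z\in A_{h'}}\frac{1}{|A_{h'}|}\frac{w_{h'}}{\sum_{h'':u\in B_{h''}}w_{h''}}$ for $z\in\Gamma(u)$, $0$ otherwise; $\mu^\alpha_{v^{out}}(v)=\alpha$, $\mu^\alpha_{v^{out}}(z)=(1-\alpha)\sum_{h':v\in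 A_{h'},z\in B_{h'}}\frac{1}{|B_{h'}|}\frac{w_{h'}}{\sum_{h'':v\in A_{h''}}w_{h''}}$ for $z\in\Gamma(v)$, $0$ otherwise. $W(\mu,\nu)=\inf_\pi\sum_{x,y}\pi(x,y)d(x,y)$ over couplings $\pi$ of $\mu,\nu$. For distinct $u,v$: $\kappa_\alpha(u,v)=1-W(\mu^\alpha_{u^{in}},\mu^\alpha_{v^{out}})/d(u,v)$. *)

theory Defs
  imports Complex_Main
begin

text \<open>A hyperedge is a pair (A_h, B_h) of vertex sets; the set of hyperedges is H,
  the weight function is w.\<close>

type_synonym 'a hedge = "'a set \<times> 'a set"

definition weighted_oriented_hypergraph ::
  "'a set \<Rightarrow> 'a hedge set \<Rightarrow> ('a hedge \<Rightarrow> real) \<Rightarrow> bool" where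
  "weighted_oriented_hypergraph V H w \<longleftrightarrow>
     finite V \<and> finite H \<and>
     (\<forall>h\<in>H. fst h \<noteq> {} \<and> snd h \<noteq> {} \<and> fst h \<subseteq> V \<and> snd h \<subseteq> V
            \<and> fst h \<inter> snd h = {}
            \<and> (snd h, fst h) \<in> H
            \<and> w h > 0 \<and> w (snd h, fst h) = w h)"

definition dpath :: "'a hedge set \<Rightarrow> 'a \<Rightarrow> 'a \<Rightarrow> 'a hedge list \<Rightarrow> bool" where
  "dpath H u v hs \<longleftrightarrow> hs \<noteq> [] \<and> set hs \<subseteq> H \<and>
     u \<in> fst (hd hs) \<and> v \<in> snd (last hs) \<and>
     (\<forall>j. Suc j < length hs \<longrightarrow> snd (hs ! j) \<inter> fst (hs ! Suc j) \<noteq> {})"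

definition strongly_connected :: "'a set \<Rightarrow> 'a hedge set \<Rightarrow> bool" where
  "strongly_connected V H \<longleftrightarrow>
     (\<forall>u\<in>V. \<forall>v\<in>V. u \<noteq> v \<longrightarrow> (\<exists>hs. dpath H u v hs))"

definition hdist :: "'a hedge set \<Rightarrow> ('a hedge \<Rightarrow> real) \<Rightarrow> 'a \<Rightarrow> 'a \<Rightarrow> real" where
  "hdist H w u v = (if u = v then 0
     else Inf {sum_list (map w hs) | hs. dpath H u v hs})"

definition Gamma :: "'a hedge set \<Rightarrow> 'a \<Rightarrow> 'a set" where
  "Gamma H v = {z. \<exists>h\<in>H. v \<in> fst h \<and> z \<in> snd h}"

definition mu_in :: "'a hedge set \<Rightarrow> ('a hedge \<Rightarrow> real) \<Rightarrow> real \<Rightarrow> 'a \<Rightarrow> 'a \<Rightarrow> real" where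
  "mu_in H w \<alpha> u z =
    (if z = u then \<alpha>
     else if z \<in> Gamma H u then
       (1 - \<alpha>) * (\<Sum>h'\<in>{h'\<in>H. u \<in> snd h' \<and> z \<in> fst h'}.
          (1 / real (card (fst h'))) * (w h' / (\<Sum>h''\<in>{h''\<in>H. u \<in> snd h''}. w h'')))
     else 0)"

definition mu_out :: "'a hedge set \<Rightarrow> ('a hedge \<Rightarrow> real) \<Rightarrow> real \<Rightarrow> 'a \<Rightarrow> 'a \<Rightarrow> real" where
  "mu_out H w \<alpha> v z =
    (if z = v then \<alpha>
     else if z \<in> Gamma H v then
       (1 - \<alpha>) * (\<Sum>h'\<in>{h'\<in>H. v \<in> fst h' \<and> z \<in> snd h'}.
          (1 / real (card (snd h'))) * (w h' / (\<Sum>h''\<in>{h''\<in>H. v \<in> fst h''}. w h'')))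
     else 0)"

definition couplings :: "'a set \<Rightarrow> ('a \<Rightarrow> real) \<Rightarrow> ('a \<Rightarrow> real) \<Rightarrow> ('a \<Rightarrow> 'a \<Rightarrow> real) set" where
  "couplings V \<mu> \<nu> = {\<pi>. (\<forall>x y. \<pi> x y \<ge> 0) \<and>
       (\<forall>x y. (x \<notin> V \<or> y \<notin> V) \<longrightarrow> \<pi> x y = 0) \<and>
       (\<forall>x\<in>V. (\<Sum>y\<in>V. \<pi> x y) = \<mu> x) \<and>
       (\<forall>y\<in>V. (\<Sum>x\<in>V. \<pi> x y) = \<nu> y)}"

definition wasserstein :: "'a set \<Rightarrow> ('a \<Rightarrow> 'a \<Rightarrow> real) \<Rightarrow> ('a \<Rightarrow> real) \<Rightarrow> ('a \<Rightarrow> real) \<Rightarrow> real" where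
  "wasserstein V d \<mu> \<nu> =
     Inf ((\<lambda>\<pi>. \<Sum>x\<in>V. \<Sum>y\<in>V. \<pi> x y * d x y) ` couplings V \<mu> \<nu>)"

definition kappa :: "'a set \<Rightarrow> 'a hedge set \<Rightarrow> ('a hedge \<Rightarrow> real) \<Rightarrow> real \<Rightarrow> 'a \<Rightarrow> 'a \<Rightarrow> real" where
  "kappa V H w \<alpha> u v =
     1 - wasserstein V (hdist H w) (mu_in H w \<alpha> u) (mu_out H w \<alpha> v) / hdist H w u v"

end

theory Submission
  imports Defs
begin

text \<open>For every coupling \<pi> of \<open>mu_in u\<close> and \<open>mu_out v\<close>, the triangle inequality
  d(u,v) \<le> d(u,x) + d(x,y) + d(y,v) bounds the transport cost from below by d(u,v) minus the
  first moments of the two measures around u and v. Apart from the mass \<alpha> sitting at u, the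
  measure \<open>mu_in u\<close> lives on vertices reachable from u through a single (reversed) hyperedge,
  so its first moment is at most (1 - \<alpha>) max w; likewise for \<open>mu_out v\<close>. Hence
  W \<ge> d(u,v) - 2 (1 - \<alpha>) max w, which rearranges to the bound on \<open>kappa \<alpha> u v\<close>.\<close>

definition distribution_on :: "'a set \<Rightarrow> ('a \<Rightarrow> real) \<Rightarrow> bool" where
  "distribution_on V \<mu> \<longleftrightarrow>
     (\<forall>x. 0 \<le> \<mu> x) \<and> (\<forall>x. x \<notin> V \<longrightarrow> \<mu> x = 0) \<and> sum \<mu> V = 1"

lemma product_coupling:
  assumes "distribution_on V \<mu>" "distribution_on V \<nu>"
  shows "(\<lambda>x y. \<mu> x * \<nu> y) \<in> couplings V \<mu> \<nu>"
  using assms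
  by (auto simp: distribution_on_def couplings_def sum_distrib_left[symmetric] sum_distrib_right[symmetric])

lemma coupling_cost_ge_dist_minus_moments:
  fixes d :: "'a \<Rightarrow> 'a \<Rightarrow> real"
  assumes \<pi>: "\<pi> \<in> couplings V \<mu> \<nu>" and mass: "sum \<mu> V = 1"
    and "u \<in> V" "v \<in> V"
    and triangle: "\<And>x y z. x \<in> V \<Longrightarrow> y \<in> V \<Longrightarrow> z \<in> V \<Longrightarrow> d x z \<le> d x y + d y z"
  shows "d u v - (\<Sum>x\<in>V. \<mu> x * d u x) - (\<Sum>y\<in>V. \<nu> y * d y v)
           \<le> (\<Sum>x\<in>V. \<Sum>y\<in>V. \<pi> x y * d x y)"
proof -
  have nonneg: "\<And>x y. 0 \<le> \<pi> x y"
    and row: "\<And>x. x \<in> V \<Longrightarrow> (\<Sum>y\<in>V. \<pi> x y) = \<mu> x"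
    and col: "\<And>y. y \<in> V \<Longrightarrow> (\<Sum>x\<in>V. \<pi> x y) = \<nu> y"
    using \<pi> by (auto simp: couplings_def)
  have "(\<Sum>x\<in>V. \<Sum>y\<in>V. \<pi> x y * d u v) = d u v"
    using row mass by (simp add: sum_distrib_right[symmetric])
  moreover have "(\<Sum>x\<in>V. \<Sum>y\<in>V. \<pi> x y * d u x) = (\<Sum>x\<in>V. \<mu> x * d u x)"
    using row by (simp add: sum_distrib_right[symmetric])
  moreover have "(\<Sum>x\<in>V. \<Sum>y\<in>V. \<pi> x y * d y v) = (\<Sum>y\<in>V. \<nu> y * d y v)"
    using col by (subst sum.swap) (simp add: sum_distrib_right[symmetric])
  moreover have "(\<Sum>x\<in>V. \<Sum>y\<in>V. \<pi> x y * (d u v - d u x - d y v))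
                   \<le> (\<Sum>x\<in>V. \<Sum>y\<in>V. \<pi> x y * d x y)"
    using triangle[OF \<open>u \<in> V\<close> _ \<open>v \<in> V\<close>] triangle[OF _ _ \<open>v \<in> V\<close>] nonneg
    by (intro sum_mono mult_left_mono) force+
  ultimately show ?thesis
    by (simp add: right_diff_distrib sum_subtractf)
qed

lemma wasserstein_ge_dist_minus_moments:
  fixes d :: "'a \<Rightarrow> 'a \<Rightarrow> real"
  assumes "distribution_on V \<mu>" "distribution_on V \<nu>" "u \<in> V" "v \<in> V"
    and "\<And>x y z. x \<in> V \<Longrightarrow> y \<in> V \<Longrightarrow> z \<in> V \<Longrightarrow> d x z \<le> d x y + d y z"
  shows "d u v - (\<Sum>x\<in>V. \<mu> x * d u x) - (\<Sum>y\<in>V. \<nu> y * d y v) \<le> wasserstein V d \<mu> \<nu>"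
  unfolding wasserstein_def
  using product_coupling[OF assms(1,2)] coupling_cost_ge_dist_minus_moments[OF _ _ assms(3-5)] assms(1)
  by (intro cInf_greatest) (auto simp: distribution_on_def)

lemma weighted_sum_le_off_point:
  fixes \<mu> f :: "'a \<Rightarrow> real"
  assumes "finite V" "u \<in> V" "\<And>x. 0 \<le> \<mu> x" "f u = 0"
    and bound: "\<And>x. x \<in> V \<Longrightarrow> x \<noteq> u \<Longrightarrow> \<mu> x \<noteq> 0 \<Longrightarrow> f x \<le> M"
  shows "(\<Sum>x\<in>V. \<mu> x * f x) \<le> (sum \<mu> V - \<mu> u) * M"
proof -
  have "(\<Sum>x\<in>V. \<mu> x * f x) = (\<Sum>x\<in>V - {u}. \<mu> x * f x)"
    using assms(1,2,4) by (simp add: sum.remove)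
  also have "\<dots> \<le> (\<Sum>x\<in>V - {u}. \<mu> x * M)"
  proof (rule sum_mono)
    fix x assume "x \<in> V - {u}"
    then show "\<mu> x * f x \<le> \<mu> x * M"
      using bound[of x] assms(3)[of x] by (cases "\<mu> x = 0") (auto intro: mult_left_mono)
  qed
  also have "\<dots> = (sum \<mu> V - \<mu> u) * M"
    using assms(1,2) by (simp add: sum_distrib_right[symmetric] sum_diff1)
  finally show ?thesis .
qed

lemma hdist_self [simp]: "hdist H w x x = 0"
  by (simp add: hdist_def)

lemma mu_in_center [simp]: "mu_in H w \<alpha> u u = \<alpha>"
  by (simp add: mu_in_def)

lemma dpath_successively:
  "dpath H u v hs \<longleftrightarrow> hs \<noteq> [] \<and> set hs \<subseteq> H \<and> u \<in> fst (hd hs) \<and> v \<in> snd (last hs) \<and>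
     successively (\<lambda>g h. snd g \<inter> fst h \<noteq> {}) hs"
  unfolding dpath_def successively_conv_nth by blast

lemma dpath_append:
  "dpath H x y p \<Longrightarrow> dpath H y z q \<Longrightarrow> dpath H x z (p @ q)"
  unfolding dpath_successively by (auto simp: successively_append_iff)

locale oriented_hypergraph =
  fixes V :: "'a set" and H :: "'a hedge set" and w :: "'a hedge \<Rightarrow> real"
  assumes weighted_oriented: "weighted_oriented_hypergraph V H w"
begin

lemma
  shows finite_vertices: "finite V"
    and finite_hedges: "finite H"
    and hedge_nonempty: "h \<in> H \<Longrightarrow> fst h \<noteq> {} \<and> snd h \<noteq> {}"
    and hedge_subset: "h \<in> H \<Longrightarrow> fst h \<subseteq> V \<and> snd h \<subseteq> V"
    and hedge_disjoint: "h \<in> H \<Longrightarrow> fst h \<inter> snd h = {}"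
    and reversal_in_hedges: "h \<in> H \<Longrightarrow> prod.swap h \<in> H"
    and weight_reversal: "h \<in> H \<Longrightarrow> w (prod.swap h) = w h"
    and weight_pos: "h \<in> H \<Longrightarrow> 0 < w h"
  using weighted_oriented by (auto simp: weighted_oriented_hypergraph_def prod.swap_def)

lemma sum_hedges_reversal:
  "(\<Sum>h\<in>{h\<in>H. P h}. f h) = (\<Sum>h\<in>{h\<in>H. P (prod.swap h)}. f (prod.swap h))"
  by (rule sum.reindex_bij_witness[where i = prod.swap and j = prod.swap])
     (auto intro: reversal_in_hedges)

lemma path_weight_ge_Min:
  assumes "dpath H x y hs"
  shows "Min (w ` H) \<le> sum_list (map w hs)"
proof -
  obtain h t where hs: "hs = h # t" and "h \<in> H" "set t \<subseteq> H"
    using assms unfolding dpath_def by (cases hs) auto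
  then have "Min (w ` H) \<le> w h" and "0 \<le> sum_list (map w t)"
    using finite_hedges weight_pos by (auto intro!: sum_list_nonneg simp: less_imp_le subset_iff)
  then show ?thesis
    using hs by simp
qed

lemma Min_weight_pos: "H \<noteq> {} \<Longrightarrow> 0 < Min (w ` H)"
  using finite_hedges weight_pos by simp

lemma hdist_le_path_weight:
  assumes "x \<noteq> y" "dpath H x y hs"
  shows "hdist H w x y \<le> sum_list (map w hs)"
  unfolding hdist_def using assms path_weight_ge_Min
  by (auto intro!: cInf_lower bdd_belowI[where m = "Min (w ` H)"])

lemma hdist_le_Max_weight:
  assumes "h \<in> H" "x \<in> fst h" "y \<in> snd h"
  shows "hdist H w x y \<le> Max (w ` H)"
proof -
  have "x \<noteq> y"
    using assms hedge_disjoint by blast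
  then have "hdist H w x y \<le> w h"
    using hdist_le_path_weight[of x y "[h]"] assms by (simp add: dpath_def)
  also have "\<dots> \<le> Max (w ` H)"
    using assms(1) finite_hedges by simp
  finally show ?thesis .
qed

text \<open>Reversal of hyperedges identifies the hyperedges leaving v with those entering v.\<close>

lemma mu_out_eq_mu_in: "mu_out H w \<alpha> v = mu_in H w \<alpha> v"
proof
  fix z
  have "(\<Sum>h\<in>{h\<in>H. v \<in> fst h}. w h) = (\<Sum>h\<in>{h\<in>H. v \<in> snd h}. w h)"
    by (subst sum_hedges_reversal) (auto intro!: sum.cong simp: weight_reversal)
  moreover have "(\<Sum>h\<in>{h\<in>H. v \<in> fst h \<and> z \<in> snd h}. 1 / real (card (snd h)) * (w h / c))
      = (\<Sum>h\<in>{h\<in>H. v \<in> snd h \<and> z \<in> fst h}. 1 / real (card (fst h)) * (w h / c))" for c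
    by (subst sum_hedges_reversal) (auto intro!: sum.cong simp: weight_reversal)
  ultimately show "mu_out H w \<alpha> v z = mu_in H w \<alpha> v z"
    by (simp add: mu_out_def mu_in_def)
qed

lemma Gamma_subset: "Gamma H u \<subseteq> V"
  using hedge_subset by (auto simp: Gamma_def)

lemma mu_in_support: "z \<noteq> u \<Longrightarrow> mu_in H w \<alpha> u z \<noteq> 0 \<Longrightarrow> z \<in> Gamma H u"
  by (auto simp: mu_in_def split: if_splits)

lemma mu_in_nonneg: "0 \<le> \<alpha> \<Longrightarrow> \<alpha> \<le> 1 \<Longrightarrow> 0 \<le> mu_in H w \<alpha> u z"
  using weight_pos unfolding mu_in_def
  by (auto intro!: mult_nonneg_nonneg sum_nonneg divide_nonneg_nonneg simp: less_imp_le)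

text \<open>The guard \<open>z \<in> Gamma H u\<close> in \<open>mu_in\<close> is redundant: reversing a hyperedge that enters u
  from z gives one that leaves u towards z.\<close>

lemma mu_in_off_center:
  assumes "z \<noteq> u"
  shows "mu_in H w \<alpha> u z = (1 - \<alpha>) * (\<Sum>h\<in>{h\<in>H. u \<in> snd h \<and> z \<in> fst h}.
           1 / real (card (fst h)) * (w h / (\<Sum>g\<in>{g\<in>H. u \<in> snd g}. w g)))"
proof (cases "z \<in> Gamma H u")
  case False
  then have "{h\<in>H. u \<in> snd h \<and> z \<in> fst h} = {}"
    using reversal_in_hedges by (fastforce simp: Gamma_def)
  moreover have "mu_in H w \<alpha> u z = 0"
    using False assms by (simp add: mu_in_def)
  ultimately show ?thesis
    by (simp only: sum.empty mult_zero_right)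
qed (use assms in \<open>simp add: mu_in_def\<close>)

lemma mu_in_mass:
  assumes "u \<in> V" "h\<^sub>0 \<in> H" "u \<in> snd h\<^sub>0"
  shows "sum (mu_in H w \<alpha> u) V = 1"
proof -
  define Hu where "Hu = {h\<in>H. u \<in> snd h}"
  define c where "c h = 1 / real (card (fst h)) * (w h / sum w Hu)" for h
  have "finite Hu"
    using finite_hedges by (simp add: Hu_def)
  have "0 < sum w Hu"
    using \<open>finite Hu\<close> assms(2,3) weight_pos by (intro sum_pos2[of _ h\<^sub>0]) (auto simp: Hu_def less_imp_le)
  have off: "mu_in H w \<alpha> u x = (1 - \<alpha>) * (\<Sum>h\<in>{h\<in>Hu. x \<in> fst h}. c h)" if "x \<noteq> u" for x
    using mu_in_off_center[OF that] unfolding Hu_def c_def by (simp add: conj_assoc)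
  have no_loop: "{h\<in>Hu. u \<in> fst h} = {}"
    using hedge_disjoint unfolding Hu_def by blast
  have tail_sum: "(\<Sum>x\<in>{x\<in>V. x \<in> fst h}. c h) = w h / sum w Hu" if "h \<in> Hu" for h
  proof -
    have "fst h \<subseteq> V" "fst h \<noteq> {}"
      using that hedge_subset hedge_nonempty by (auto simp: Hu_def)
    then have "{x\<in>V. x \<in> fst h} = fst h" and "finite (fst h)"
      using finite_vertices finite_subset by auto
    with \<open>fst h \<noteq> {}\<close> show ?thesis
      by (simp add: c_def)
  qed
  have "sum (mu_in H w \<alpha> u) V = \<alpha> + (\<Sum>x\<in>V - {u}. (1 - \<alpha>) * (\<Sum>h\<in>{h\<in>Hu. x \<in> fst h}. c h))"
    using assms(1) finite_vertices off by (simp add: sum.remove)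
  also have "\<dots> = \<alpha> + (1 - \<alpha>) * (\<Sum>x\<in>V. \<Sum>h\<in>{h\<in>Hu. x \<in> fst h}. c h)"
    using assms(1) finite_vertices by (simp add: sum.remove no_loop sum_distrib_left)
  also have "\<dots> = \<alpha> + (1 - \<alpha>) * (\<Sum>h\<in>Hu. \<Sum>x\<in>{x\<in>V. x \<in> fst h}. c h)"
    using finite_vertices \<open>finite Hu\<close> by (simp add: sum.swap_restrict)
  also have "\<dots> = 1"
    using tail_sum \<open>0 < sum w Hu\<close> by (simp add: sum_divide_distrib[symmetric])
  finally show ?thesis .
qed

lemma distribution_mu_in:
  assumes "u \<in> V" "h \<in> H" "u \<in> snd h" "0 \<le> \<alpha>" "\<alpha> \<le> 1"
  shows "distribution_on V (mu_in H w \<alpha> u)"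
proof -
  have "mu_in H w \<alpha> u x = 0" if "x \<notin> V" for x
    using that assms(1) mu_in_support Gamma_subset by (metis in_mono)
  then show ?thesis
    using mu_in_nonneg[OF assms(4,5)] mu_in_mass[OF assms(1-3)] by (simp add: distribution_on_def)
qed

lemma mu_in_moment:
  assumes "u \<in> V" "h \<in> H" "u \<in> snd h" "0 \<le> \<alpha>" "\<alpha> \<le> 1"
  shows "(\<Sum>x\<in>V. mu_in H w \<alpha> u x * hdist H w u x) \<le> (1 - \<alpha>) * Max (w ` H)"
proof -
  have "(\<Sum>x\<in>V. mu_in H w \<alpha> u x * hdist H w u x)
          \<le> (sum (mu_in H w \<alpha> u) V - mu_in H w \<alpha> u u) * Max (w ` H)"
  proof (rule weighted_sum_le_off_point[OF finite_vertices assms(1)])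
    fix x assume "x \<noteq> u" "mu_in H w \<alpha> u x \<noteq> 0"
    then obtain g where "g \<in> H" "u \<in> fst g" "x \<in> snd g"
      using mu_in_support unfolding Gamma_def by blast
    then show "hdist H w u x \<le> Max (w ` H)"
      by (rule hdist_le_Max_weight)
  qed (use mu_in_nonneg assms(4,5) in auto)
  then show ?thesis
    using mu_in_mass[OF assms(1-3)] by simp
qed

lemma mu_out_moment:
  assumes "v \<in> V" "h \<in> H" "v \<in> snd h" "0 \<le> \<alpha>" "\<alpha> \<le> 1"
  shows "(\<Sum>y\<in>V. mu_out H w \<alpha> v y * hdist H w y v) \<le> (1 - \<alpha>) * Max (w ` H)"
proof -
  have "(\<Sum>y\<in>V. mu_in H w \<alpha> v y * hdist H w y v)
          \<le> (sum (mu_in H w \<alpha> v) V - mu_in H w \<alpha> v v) * Max (w ` H)"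
  proof (rule weighted_sum_le_off_point[OF finite_vertices assms(1)])
    fix y assume "y \<noteq> v" "mu_in H w \<alpha> v y \<noteq> 0"
    then obtain g where "g \<in> H" "v \<in> fst g" "y \<in> snd g"
      using mu_in_support unfolding Gamma_def by blast
    then show "hdist H w y v \<le> Max (w ` H)"
      using hdist_le_Max_weight[of "prod.swap g"] reversal_in_hedges by simp
  qed (use mu_in_nonneg assms(4,5) in auto)
  then show ?thesis
    using mu_in_mass[OF assms(1-3)] by (simp add: mu_out_eq_mu_in)
qed

end

locale connected_oriented_hypergraph = oriented_hypergraph +
  assumes strongly_connected: "strongly_connected V H"
begin

lemma path_exists:
  assumes "x \<in> V" "y \<in> V" "x \<noteq> y"
  obtains hs where "dpath H x y hs"
  using strongly_connected assms unfolding strongly_connected_def by blast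

lemma hdist_ge_Min_weight:
  assumes "x \<in> V" "y \<in> V" "x \<noteq> y"
  shows "Min (w ` H) \<le> hdist H w x y"
proof -
  obtain hs where "dpath H x y hs"
    using path_exists assms .
  then show ?thesis
    unfolding hdist_def using assms(3) path_weight_ge_Min by (auto intro!: cInf_greatest)
qed

lemma hdist_pos:
  assumes "x \<in> V" "y \<in> V" "x \<noteq> y"
  shows "0 < hdist H w x y"
proof -
  obtain hs where "dpath H x y hs"
    using path_exists assms .
  then have "H \<noteq> {}"
    unfolding dpath_def by (cases hs) auto
  then show ?thesis
    using Min_weight_pos hdist_ge_Min_weight[OF assms] by linarith
qed

lemma hdist_nonneg: "x \<in> V \<Longrightarrow> y \<in> V \<Longrightarrow> 0 \<le> hdist H w x y"
  using hdist_pos[of x y] by (cases "x = y") auto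

lemma hdist_triangle:
  assumes "x \<in> V" "y \<in> V" "z \<in> V"
  shows "hdist H w x z \<le> hdist H w x y + hdist H w y z"
proof (cases "x = y \<or> y = z \<or> x = z")
  case True
  then show ?thesis
    using hdist_nonneg[of x y] hdist_nonneg[of y z] assms by auto
next
  case False
  then have xy: "x \<noteq> y" and yz: "y \<noteq> z" and xz: "x \<noteq> z"
    by auto
  have "hdist H w x z - sum_list (map w q) \<le> hdist H w x y" if q: "dpath H y z q" for q
  proof -
    have "hdist H w x z - sum_list (map w q) \<le> sum_list (map w p)" if "dpath H x y p" for p
      using hdist_le_path_weight[OF xz dpath_append[OF that q]] by simp
    moreover obtain p where "dpath H x y p"
      using path_exists assms(1,2) xy .
    ultimately show ?thesis
      unfolding hdist_def using xy by (force intro!: cInf_greatest)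
  qed
  moreover obtain q where "dpath H y z q"
    using path_exists assms(2,3) yz .
  ultimately have "hdist H w x z - hdist H w x y \<le> Inf {sum_list (map w hs) | hs. dpath H y z hs}"
    by (force intro!: cInf_greatest)
  then show ?thesis
    using yz by (simp add: hdist_def[of H w y z])
qed

lemma incoming_hedge:
  assumes "u \<in> V" "x \<in> V" "u \<noteq> x"
  obtains h where "h \<in> H" "u \<in> snd h"
proof -
  obtain hs where "dpath H u x hs"
    using path_exists assms .
  then have "hd hs \<in> H" "u \<in> fst (hd hs)"
    unfolding dpath_def by auto
  then show ?thesis
    using that[of "prod.swap (hd hs)"] reversal_in_hedges by simp
qed

lemma kappa_le_Max_weight:
  assumes "u \<in> V" "v \<in> V" "u \<noteq> v" "0 \<le> \<alpha>" "\<alpha> \<le> 1"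
  shows "kappa V H w \<alpha> u v \<le> 2 * (1 - \<alpha>) * Max (w ` H) / hdist H w u v"
proof -
  obtain hu where "hu \<in> H" "u \<in> snd hu"
    using incoming_hedge assms(1-3) .
  obtain hv where "hv \<in> H" "v \<in> snd hv"
    using incoming_hedge assms(2,1) assms(3)[symmetric] .
  have \<mu>: "distribution_on V (mu_in H w \<alpha> u)"
    using distribution_mu_in[OF assms(1) \<open>hu \<in> H\<close> \<open>u \<in> snd hu\<close> assms(4,5)] .
  have \<nu>: "distribution_on V (mu_out H w \<alpha> v)"
    using distribution_mu_in[OF assms(2) \<open>hv \<in> H\<close> \<open>v \<in> snd hv\<close> assms(4,5)]
    by (simp only: mu_out_eq_mu_in)
  let ?D = "hdist H w u v" and ?M = "Max (w ` H)"
    and ?W = "wasserstein V (hdist H w) (mu_in H w \<alpha> u) (mu_out H w \<alpha> v)"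
  have "?D - 2 * (1 - \<alpha>) * ?M \<le> ?W"
    using wasserstein_ge_dist_minus_moments[where d = "hdist H w", OF \<mu> \<nu> assms(1,2) hdist_triangle]
      mu_in_moment[OF assms(1) \<open>hu \<in> H\<close> \<open>u \<in> snd hu\<close> assms(4,5)]
      mu_out_moment[OF assms(2) \<open>hv \<in> H\<close> \<open>v \<in> snd hv\<close> assms(4,5)]
    by linarith
  moreover have "0 < ?D"
    using hdist_pos assms(1-3) .
  ultimately have "1 - ?W / ?D \<le> 1 - (?D - 2 * (1 - \<alpha>) * ?M) / ?D"
    by (simp add: divide_right_mono)
  also have "\<dots> = 2 * (1 - \<alpha>) * ?M / ?D"
    using \<open>0 < ?D\<close> by (simp add: field_simps)
  finally show ?thesis
    unfolding kappa_def .
qed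

end

theorem mainTheorem7:
  fixes V :: "'a set" and H :: "'a hedge set" and w :: "'a hedge \<Rightarrow> real"
    and u v :: 'a and \<alpha> :: real
  assumes "weighted_oriented_hypergraph V H w"
    and "strongly_connected V H"
    and "card V \<ge> 2"
    and "u \<in> V" and "v \<in> V" and "u \<noteq> v"
    and "0 \<le> \<alpha>" and "\<alpha> < 1"
  shows "kappa V H w \<alpha> u v / (1 - \<alpha>) \<le> 2 * Max (w ` H) / hdist H w u v"
proof -
  interpret connected_oriented_hypergraph V H w
    by unfold_locales (fact assms)+
  have "kappa V H w \<alpha> u v / (1 - \<alpha>) \<le> 2 * (1 - \<alpha>) * Max (w ` H) / hdist H w u v / (1 - \<alpha>)"
    using kappa_le_Max_weight[OF assms(4-7)] assms(8) by (intro divide_right_mono) auto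
  also have "\<dots> = 2 * Max (w ` H) / hdist H w u v"
    using assms(8) hdist_pos[OF assms(4-6)] by (simp add: field_simps)
  finally show ?thesis .
qed

end
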